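(* Let $N$ be a finite set, $C\subseteq N$ with $|C|\ge2$, and $k\in\{1,\ldots,|C|-1\}$. Then the generalized cluster inequality $$\sum_{a\in C}\ \sum_{B\subseteq N\setminus\{a\}:\,|B\cap C|\ge k}\eta(a|B)\le |C|-k$$ defines an SE facet of the family-variable polytope $P_N$.
   Context: $\mathrm{DAG}(N)$ is the set of acyclic directed graphs over $N$; $\mathrm{pa}_G(a)$ is the parent set of $a$ in $G$; $G\sim H$ (Markov equivalence) means same adjacencies and same immoralities (induced $a\to c\leftarrow b$ with $a,b$ non-adjacent). $\Upsilon=\{(a|B): a\in N,\ \emptyset\neq B\subseteq N\setminus\{a\}\}$; $\eta_G\in\mathbb{R}^{\Upsilon}$ has $\eta_G(a|B)=1$ if $B=\mathrm{pa}_G(a)$, else $0$; $P_N=\mathrm{conv}\{\eta_G:G\in\mathrm{DAG}(N)\}$. $o$ is an SE objective if $\langle o,\eta_G\rangle=\langle o,\eta_H\rangle$ whenever $G\sim H$; a facet $F$ of $P_N$ is SE if there exist an SE objective $o$ and $u$ with $P_N\subseteq\{v:\langle o,v\rangle\le u\}$ and $F=\{v\in P_N:\langle o,v\rangle=u\}$. *)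

theory Defs
  imports "HOL-Analysis.Analysis"
begin

text \<open>The finite ground set N is the (finite) type 'n, i.e. N = UNIV.
  A directed graph over N is an edge relation G; (b,a) \<in> G means b \<rightarrow> a.
  DAG(N) = acyclic relations on 'n.\<close>

definition is_DAG :: "('n \<times> 'n) set \<Rightarrow> bool" where
  "is_DAG G \<longleftrightarrow> acyclic G"

definition pa :: "('n \<times> 'n) set \<Rightarrow> 'n \<Rightarrow> 'n set" where
  "pa G a = {b. (b, a) \<in> G}"

definition adjacent :: "('n \<times> 'n) set \<Rightarrow> 'n \<Rightarrow> 'n \<Rightarrow> bool" where
  "adjacent G a b \<longleftrightarrow> (a, b) \<in> G \<or> (b, a) \<in> G"

definition immorality :: "('n \<times> 'n) set \<Rightarrow> 'n \<Rightarrow> 'n \<Rightarrow> 'n \<Rightarrow> bool" where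
  "immorality G a c b \<longleftrightarrow> (a, c) \<in> G \<and> (b, c) \<in> G \<and> a \<noteq> b \<and> \<not> adjacent G a b"

definition markov_equiv :: "('n \<times> 'n) set \<Rightarrow> ('n \<times> 'n) set \<Rightarrow> bool" where
  "markov_equiv G H \<longleftrightarrow>
     (\<forall>a b. adjacent G a b \<longleftrightarrow> adjacent H a b) \<and>
     (\<forall>a c b. immorality G a c b \<longleftrightarrow> immorality H a c b)"

text \<open>Index set Upsilon = {(a|B) : B nonempty, a \<notin> B}. Vectors of R^Upsilon are
  represented in real^('n \<times> 'n set), with coordinates outside Upsilon unused (zero
  for all points of P_N).\<close>
definition Ups :: "('n \<times> 'n set) set" where
  "Ups = {(a, B). B \<noteq> {} \<and> a \<notin> B}"

definition eta :: "('n \<times> 'n) set \<Rightarrow> real ^ ('n::finite \<times> 'n set)" where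
  "eta G = (\<chi> p. if p \<in> Ups \<and> snd p = pa G (fst p) then 1 else 0)"

definition family_polytope :: "(real ^ ('n::finite \<times> 'n set)) set" where
  "family_polytope = convex hull {eta G | G. is_DAG G}"

definition SE_objective :: "real ^ ('n::finite \<times> 'n set) \<Rightarrow> bool" where
  "SE_objective w \<longleftrightarrow>
     (\<forall>G H. is_DAG G \<longrightarrow> is_DAG H \<longrightarrow> markov_equiv G H \<longrightarrow> w \<bullet> eta G = w \<bullet> eta H)"

definition SE_facet :: "(real ^ ('n::finite \<times> 'n set)) set \<Rightarrow> bool" where
  "SE_facet F \<longleftrightarrow> F facet_of family_polytope \<and>
     (\<exists>w u. SE_objective w \<and> family_polytope \<subseteq> {v. w \<bullet> v \<le> u} \<and>
            F = {v \<in> family_polytope. w \<bullet> v = u})"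

definition gen_cluster_lhs :: "'n set \<Rightarrow> nat \<Rightarrow> real ^ ('n::finite \<times> 'n set) \<Rightarrow> real" where
  "gen_cluster_lhs C k v =
     (\<Sum>a\<in>C. \<Sum>B\<in>{B. B \<subseteq> UNIV - {a} \<and> card (B \<inter> C) \<ge> k}. v $ (a, B))"

end

theory Submission
  imports Defs
begin

text \<open>Under eta, a DAG scores the number of vertices of C with at least k parents in C. Along a
  topological order of C the first k vertices have fewer than k parents in C, hence validity.
  The score is invariant under Markov equivalence: summing (1 + x) to the power of the number of
  parents in C over the vertices of C enumerates, by size, the subsets T of C that have a vertex
  whose parent set contains the rest of T, and these subsets are determined by the skeleton and
  the immoralities. Finally, a linear functional constant on the tight DAGs is, on the coordinates
  in Ups, a multiple of the inequality: this is seen by changing a single parent set in the DAGs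
  where every vertex of C - L has parent set L (with card L = k). As the family polytope lies in
  the coordinate subspace of Ups, the face has codimension one.\<close>

section \<open>DAGs given by parent sets\<close>

definition graph_of :: "('n \<Rightarrow> 'n set) \<Rightarrow> ('n \<times> 'n) set" where
  "graph_of \<pi> = {(b, a). b \<in> \<pi> a}"

lemma pa_graph_of [simp]: "pa (graph_of \<pi>) a = \<pi> a"
  by (simp add: pa_def graph_of_def)

lemma is_DAG_graph_of_rank:
  assumes "\<And>a b. b \<in> \<pi> a \<Longrightarrow> r b < (r a :: nat)"
  shows "is_DAG (graph_of \<pi>)"
proof -
  have "(x, y) \<in> (graph_of \<pi>)\<^sup>+ \<Longrightarrow> r x < r y" for x y
  proof (induction rule: trancl_induct)
    case (base y)
    then show ?case using assms by (auto simp: graph_of_def)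
  next
    case (step y z)
    then show ?case using assms by (simp add: graph_of_def) (meson less_trans)
  qed
  then show ?thesis unfolding is_DAG_def acyclic_def by blast
qed

lemma is_DAG_empty: "is_DAG {}"
  by (simp add: is_DAG_def acyclic_def)

lemma DAG_notin_pa: "is_DAG G \<Longrightarrow> a \<notin> pa G a"
  unfolding is_DAG_def acyclic_def pa_def by (blast intro: r_into_trancl)

lemma DAG_asym: "is_DAG G \<Longrightarrow> (a, b) \<in> G \<Longrightarrow> (b, a) \<notin> G"
  unfolding is_DAG_def acyclic_def by (meson r_into_trancl trancl_trans)

lemma DAG_sink_exists:
  fixes G :: "('n::finite \<times> 'n) set"
  assumes "is_DAG G" "T \<noteq> {}"
  shows "\<exists>s\<in>T. \<forall>y\<in>T. (s, y) \<notin> G"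
proof -
  have "wf (G\<inverse>)"
    using assms(1) unfolding is_DAG_def by (intro finite_acyclic_wf) auto
  then obtain s where "s \<in> T" "\<forall>y. (y, s) \<in> G\<inverse> \<longrightarrow> y \<notin> T"
    using assms(2) unfolding wf_eq_minimal by blast
  then show ?thesis by auto
qed

lemma eta_empty: "eta {} = 0"
  by (auto simp: eta_def vec_eq_iff Ups_def pa_def)

lemma inner_eta:
  fixes w :: "real ^ ('n::finite \<times> 'n set)"
  shows "w \<bullet> eta G = (\<Sum>a\<in>UNIV. if (a, pa G a) \<in> Ups then w $ (a, pa G a) else 0)"
proof -
  have "w \<bullet> eta G = (\<Sum>p\<in>UNIV. if p \<in> Ups \<and> snd p = pa G (fst p) then w $ p else 0)"
    by (simp add: inner_vec_def eta_def if_distrib cong: if_cong)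
  also have "\<dots> = (\<Sum>a\<in>UNIV. \<Sum>B\<in>UNIV. if (a, B) \<in> Ups \<and> B = pa G a then w $ (a, B) else 0)"
    by (simp add: sum.cartesian_product split_def flip: UNIV_Times_UNIV) (intro sum.cong; auto)
  also have "\<dots> = (\<Sum>a\<in>UNIV. \<Sum>B\<in>UNIV. if B = pa G a then (if (a, B) \<in> Ups then w $ (a, B) else 0) else 0)"
    by (intro sum.cong) auto
  also have "\<dots> = (\<Sum>a\<in>UNIV. if (a, pa G a) \<in> Ups then w $ (a, pa G a) else 0)"
    by (simp only: sum.delta finite UNIV_I if_True)
  finally show ?thesis .
qed

section \<open>The cluster vector and validity\<close>

definition cluster_vector :: "'n set \<Rightarrow> nat \<Rightarrow> real ^ ('n::finite \<times> 'n set)" where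
  "cluster_vector C k =
     (\<chi> p. if fst p \<in> C \<and> snd p \<subseteq> UNIV - {fst p} \<and> k \<le> card (snd p \<inter> C) then 1 else 0)"

lemma gen_cluster_lhs_eq_inner: "gen_cluster_lhs C k v = cluster_vector C k \<bullet> v"
proof -
  let ?Q = "Sigma C (\<lambda>a. {B. B \<subseteq> UNIV - {a} \<and> card (B \<inter> C) \<ge> k})"
  have "cluster_vector C k \<bullet> v = (\<Sum>p\<in>UNIV. if p \<in> ?Q then v $ p else 0)"
    by (auto simp: inner_vec_def cluster_vector_def intro!: sum.cong)
  also have "\<dots> = (\<Sum>p\<in>?Q. v $ p)"
    by (simp add: sum.If_cases)
  also have "\<dots> = gen_cluster_lhs C k v"
    unfolding gen_cluster_lhs_def by (simp add: sum.Sigma)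
  finally show ?thesis by simp
qed

definition cluster_indegree :: "'n set \<Rightarrow> ('n \<times> 'n) set \<Rightarrow> 'n \<Rightarrow> nat" where
  "cluster_indegree C G a = card (pa G a \<inter> C)"

lemma cluster_vector_inner_eta:
  fixes C :: "'n::finite set"
  assumes "is_DAG G" "1 \<le> k"
  shows "cluster_vector C k \<bullet> eta G = real (card {a\<in>C. k \<le> cluster_indegree C G a})"
proof -
  have "cluster_vector C k \<bullet> eta G = (\<Sum>a\<in>UNIV. if a \<in> {a\<in>C. k \<le> cluster_indegree C G a} then 1 else 0)"
    unfolding inner_eta
  proof (rule sum.cong[OF refl])
    fix a
    have "a \<notin> pa G a" using DAG_notin_pa[OF assms(1)] .
    moreover have "pa G a \<noteq> {}" if "k \<le> cluster_indegree C G a"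
      using that assms(2) by (auto simp: cluster_indegree_def)
    ultimately show "(if (a, pa G a) \<in> Ups then cluster_vector C k $ (a, pa G a) else 0) =
        (if a \<in> {a \<in> C. k \<le> cluster_indegree C G a} then 1 else 0)"
      by (auto simp: Ups_def cluster_vector_def cluster_indegree_def)
  qed
  then show ?thesis by (simp add: sum.If_cases)
qed

lemma card_low_cluster_indegree:
  fixes C :: "'n::finite set"
  assumes "is_DAG G" "k \<le> card C"
  shows "k \<le> card {a\<in>C. cluster_indegree C G a < k}"
  using assms(2)
proof (induction "card C" arbitrary: C)
  case 0
  then show ?case by simp
next
  case (Suc n)
  have "C \<noteq> {}" using Suc.hyps(2) by auto
  then obtain s where s: "s \<in> C" "\<forall>y\<in>C. (s, y) \<notin> G"
    using DAG_sink_exists[OF assms(1)] by blast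
  show ?case
  proof (cases "k \<le> n")
    case True
    have same: "cluster_indegree (C - {s}) G a = cluster_indegree C G a" if "a \<in> C - {s}" for a
    proof -
      have "pa G a \<inter> (C - {s}) = pa G a \<inter> C" using s that by (auto simp: pa_def)
      then show ?thesis by (simp add: cluster_indegree_def)
    qed
    have "card (C - {s}) = n" using Suc.hyps(2) s(1) by simp
    then have "k \<le> card {a\<in>C - {s}. cluster_indegree (C - {s}) G a < k}"
      using True by (intro Suc.hyps(1)) simp_all
    also have "\<dots> \<le> card {a\<in>C. cluster_indegree C G a < k}"
      using same by (intro card_mono) auto
    finally show ?thesis .
  next
    case False
    have "cluster_indegree C G a < k" if "a \<in> C" for a
    proof -
      have "cluster_indegree C G a \<le> card (C - {a})"
        unfolding cluster_indegree_def using DAG_notin_pa[OF assms(1)] by (intro card_mono) auto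
      then show ?thesis using that False Suc.hyps(2) by (simp add: card_Diff_singleton)
    qed
    then have "{a\<in>C. cluster_indegree C G a < k} = C" by blast
    then show ?thesis using Suc.prems by simp
  qed
qed

lemma card_high_cluster_indegree_le:
  fixes C :: "'n::finite set"
  assumes "is_DAG G" "k \<le> card C"
  shows "card {a\<in>C. k \<le> cluster_indegree C G a} \<le> card C - k"
proof -
  have "card C = card ({a\<in>C. k \<le> cluster_indegree C G a} \<union> {a\<in>C. cluster_indegree C G a < k})"
    by (rule arg_cong[where f = card]) auto
  also have "\<dots> = card {a\<in>C. k \<le> cluster_indegree C G a} + card {a\<in>C. cluster_indegree C G a < k}"
    by (rule card_Un_disjoint) auto
  finally show ?thesis using card_low_cluster_indegree[OF assms] by linarith
qed

lemma family_polytope_cluster_valid: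
  fixes C :: "'n::finite set"
  assumes "1 \<le> k" "k \<le> card C"
  shows "(family_polytope :: (real ^ ('n \<times> 'n set)) set)
           \<subseteq> {v. cluster_vector C k \<bullet> v \<le> real (card C) - real k}"
  unfolding family_polytope_def
proof (rule hull_minimal)
  show "{eta G |G. is_DAG G} \<subseteq> {v. cluster_vector C k \<bullet> v \<le> real (card C) - real k}"
  proof clarify
    fix G :: "('n \<times> 'n) set"
    assume G: "is_DAG G"
    have "cluster_vector C k \<bullet> eta G = real (card {a\<in>C. k \<le> cluster_indegree C G a})"
      using G assms(1) by (rule cluster_vector_inner_eta)
    also have "\<dots> \<le> real (card C - k)"
      using card_high_cluster_indegree_le[OF G assms(2)] by (rule of_nat_mono)
    also have "\<dots> = real (card C) - real k"
      using assms(2) by (rule of_nat_diff)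
    finally show "cluster_vector C k \<bullet> eta G \<le> real (card C) - real k" .
  qed
qed (rule convex_halfspace_le)

section \<open>Invariance under Markov equivalence\<close>

definition is_family_subset :: "('n \<times> 'n) set \<Rightarrow> 'n set \<Rightarrow> bool" where
  "is_family_subset G T \<longleftrightarrow> (\<exists>v\<in>T. T - {v} \<subseteq> pa G v)"

lemma markov_equiv_sym: "markov_equiv G H \<Longrightarrow> markov_equiv H G"
  unfolding markov_equiv_def by auto

text \<open>In H the family is headed by the sink w of T: any other u \<in> T is adjacent to w,
  either directly or, failing that, because u \<rightarrow> v \<leftarrow> w would be an immorality of G.\<close>

lemma is_family_subset_markov_equiv:
  fixes G :: "('n::finite \<times> 'n) set"
  assumes G: "is_DAG G" and H: "is_DAG H" and GH: "markov_equiv G H"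
    and T: "is_family_subset G T"
  shows "is_family_subset H T"
proof -
  obtain v where v: "v \<in> T" "\<And>x. x \<in> T - {v} \<Longrightarrow> (x, v) \<in> G"
    using T unfolding is_family_subset_def pa_def by blast
  then obtain w where w: "w \<in> T" "\<forall>y\<in>T. (w, y) \<notin> H"
    using DAG_sink_exists[OF H, of T] by blast
  have adj: "adjacent G a b \<longleftrightarrow> adjacent H a b" for a b
    using GH unfolding markov_equiv_def by blast
  have imm: "immorality G a c b \<longleftrightarrow> immorality H a c b" for a b c
    using GH unfolding markov_equiv_def by blast
  have "(u, w) \<in> H" if u: "u \<in> T" "u \<noteq> w" for u
  proof (cases "w = v")
    case True
    then have "adjacent H u w" using adj v u by (auto simp: adjacent_def)
    then show ?thesis using w u by (auto simp: adjacent_def)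
  next
    case False
    then have wv: "(w, v) \<in> G" using v w by auto
    then have "adjacent H w v" using adj by (auto simp: adjacent_def)
    then have vw: "(v, w) \<in> H" using w v by (auto simp: adjacent_def)
    show ?thesis
    proof (cases "u = v \<or> adjacent H u w")
      case True
      then show ?thesis using vw w u by (auto simp: adjacent_def)
    next
      case False
      then have "immorality G u v w"
        using adj v u wv by (auto simp: immorality_def)
      then have "(w, v) \<in> H" using imm by (simp add: immorality_def)
      then show ?thesis using w v by auto
    qed
  qed
  then show ?thesis unfolding is_family_subset_def pa_def using w by blast
qed

lemma sum_Pow_power_card:
  fixes x :: "'a::comm_semiring_1"
  assumes "finite A"
  shows "(\<Sum>S\<in>Pow A. x ^ card S) = (1 + x) ^ card A"
  using assms
proof (induction A rule: finite_induct)
  case empty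
  then show ?case by simp
next
  case (insert a A)
  have inj: "inj_on (insert a) (Pow A)"
    using insert.hyps(2) by (auto simp: inj_on_def)
  have "(\<Sum>S\<in>Pow (insert a A). x ^ card S)
      = (\<Sum>S\<in>Pow A. x ^ card S) + (\<Sum>S\<in>insert a ` Pow A. x ^ card S)"
    unfolding Pow_insert by (rule sum.union_disjoint) (use insert.hyps in auto)
  also have "(\<Sum>S\<in>insert a ` Pow A. x ^ card S) = (\<Sum>S\<in>Pow A. x * x ^ card S)"
    unfolding sum.reindex[OF inj] comp_def
  proof (intro sum.cong refl)
    fix S assume "S \<in> Pow A"
    then have "finite S" "a \<notin> S" using insert.hyps finite_subset by auto
    then show "x ^ card (insert a S) = x * x ^ card S" by simp
  qed
  finally show ?case
    using insert.IH insert.hyps by (simp add: sum_distrib_left[symmetric] algebra_simps)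
qed

definition family_subsets :: "'n set \<Rightarrow> ('n \<times> 'n) set \<Rightarrow> 'n set set" where
  "family_subsets C G = {T. T \<subseteq> C \<and> 2 \<le> card T \<and> is_family_subset G T}"

lemma inj_on_insert_parents:
  assumes "is_DAG G"
  shows "inj_on (\<lambda>(a, S). insert a S) (SIGMA a:UNIV. Pow (pa G a))"
proof (rule inj_onI, clarsimp)
  fix a b S R
  assume S: "S \<subseteq> pa G a" and R: "R \<subseteq> pa G b" and eq: "insert a S = insert b R"
  have "a \<notin> S" "b \<notin> R" using S R DAG_notin_pa[OF assms] by auto
  have "a = b"
  proof (rule ccontr)
    assume "a \<noteq> b"
    then have "b \<in> S" "a \<in> R" using eq by auto
    then show False using S R DAG_asym[OF assms] by (auto simp: pa_def)
  qed
  with eq \<open>a \<notin> S\<close> \<open>b \<notin> R\<close> show "a = b \<and> S = R"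
    by (metis Diff_insert_absorb)
qed

lemma bij_betw_family_subsets:
  fixes C :: "'n::finite set"
  assumes G: "is_DAG G"
  shows "bij_betw (\<lambda>(a, S). insert a S) (SIGMA a:C. Pow (pa G a \<inter> C) - {{}}) (family_subsets C G)"
  unfolding bij_betw_def
proof
  show "inj_on (\<lambda>(a, S). insert a S) (SIGMA a:C. Pow (pa G a \<inter> C) - {{}})"
    by (rule inj_on_subset[OF inj_on_insert_parents[OF G]]) auto
  show "(\<lambda>(a, S). insert a S) ` (SIGMA a:C. Pow (pa G a \<inter> C) - {{}}) = family_subsets C G"
  proof (intro equalityI subsetI)
    fix T assume "T \<in> (\<lambda>(a, S). insert a S) ` (SIGMA a:C. Pow (pa G a \<inter> C) - {{}})"
    then obtain a S where aS: "a \<in> C" "S \<subseteq> pa G a \<inter> C" "S \<noteq> {}" "T = insert a S"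
      by blast
    have "a \<notin> S" using aS DAG_notin_pa[OF G] by auto
    moreover have "card S \<ge> 1" using aS by (simp add: Suc_leI card_gt_0_iff)
    ultimately have "card T \<ge> 2" using aS by simp
    moreover have "is_family_subset G T"
      unfolding is_family_subset_def using aS by blast
    ultimately show "T \<in> family_subsets C G" using aS by (simp add: family_subsets_def)
  next
    fix T assume "T \<in> family_subsets C G"
    then obtain v where T: "T \<subseteq> C" "2 \<le> card T" "v \<in> T" "T - {v} \<subseteq> pa G v"
      unfolding family_subsets_def is_family_subset_def by blast
    have "T - {v} \<noteq> {}"
    proof
      assume "T - {v} = {}"
      then have "T = {v}" using T(3) by auto
      then show False using T(2) by simp
    qed
    with T have "(v, T - {v}) \<in> (SIGMA a:C. Pow (pa G a \<inter> C) - {{}})" by auto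
    moreover have "T = insert v (T - {v})" using T by auto
    ultimately show "T \<in> (\<lambda>(a, S). insert a S) ` (SIGMA a:C. Pow (pa G a \<inter> C) - {{}})"
      by (intro image_eqI[where x = "(v, T - {v})"]) simp_all
  qed
qed

lemma sum_power_cluster_indegree:
  fixes C :: "'n::finite set" and x :: real
  assumes G: "is_DAG G"
  shows "(\<Sum>v\<in>C. (1 + x) ^ cluster_indegree C G v)
           = real (card C) + (\<Sum>T\<in>family_subsets C G. x ^ (card T - 1))"
proof -
  let ?Q = "\<lambda>v. Pow (pa G v \<inter> C) - {{}}"
  have "(\<Sum>v\<in>C. (1 + x) ^ cluster_indegree C G v) = (\<Sum>v\<in>C. \<Sum>S\<in>Pow (pa G v \<inter> C). x ^ card S)"
    unfolding cluster_indegree_def by (intro sum.cong refl) (rule sum_Pow_power_card[OF finite, symmetric])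
  also have "\<dots> = (\<Sum>v\<in>C. 1 + (\<Sum>S\<in>?Q v. x ^ card S))"
    by (intro sum.cong refl) (simp add: sum.remove[of _ "{}"])
  also have "\<dots> = real (card C) + (\<Sum>p\<in>Sigma C ?Q. x ^ card (snd p))"
    by (simp add: sum.distrib sum.Sigma split_def)
  also have "(\<Sum>p\<in>Sigma C ?Q. x ^ card (snd p)) = (\<Sum>p\<in>Sigma C ?Q. x ^ (card (insert (fst p) (snd p)) - 1))"
  proof (rule sum.cong[OF refl])
    fix p assume "p \<in> Sigma C ?Q"
    then have "fst p \<notin> snd p" using DAG_notin_pa[OF G] by auto
    then show "x ^ card (snd p) = x ^ (card (insert (fst p) (snd p)) - 1)" by simp
  qed
  also have "\<dots> = (\<Sum>T\<in>family_subsets C G. x ^ (card T - 1))"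
    using sum.reindex_bij_betw[OF bij_betw_family_subsets[OF G], of "\<lambda>T. x ^ (card T - 1)"]
    by (simp add: case_prod_unfold)
  finally show ?thesis .
qed

lemma sum_power_cluster_indegree_markov_equiv:
  fixes C :: "'n::finite set" and y :: real
  assumes G: "is_DAG G" and H: "is_DAG H" and GH: "markov_equiv G H"
  shows "(\<Sum>v\<in>C. y ^ cluster_indegree C G v) = (\<Sum>v\<in>C. y ^ cluster_indegree C H v)"
proof -
  have "family_subsets C G = family_subsets C H"
    using is_family_subset_markov_equiv[OF G H GH] is_family_subset_markov_equiv[OF H G markov_equiv_sym[OF GH]]
    unfolding family_subsets_def by blast
  then have "(\<Sum>v\<in>C. (1 + (y - 1)) ^ cluster_indegree C G v) = (\<Sum>v\<in>C. (1 + (y - 1)) ^ cluster_indegree C H v)"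
    unfolding sum_power_cluster_indegree[OF G] sum_power_cluster_indegree[OF H] by simp
  then show ?thesis by simp
qed

lemma sum_comp_eq_sum_card_fibres:
  fixes f :: "nat \<Rightarrow> 'a::semiring_1"
  assumes "finite A" "\<forall>v\<in>A. d v \<le> K"
  shows "(\<Sum>v\<in>A. f (d v)) = (\<Sum>i\<le>K. of_nat (card {v\<in>A. d v = i}) * f i)"
proof -
  have "(\<Sum>v\<in>A. f (d v)) = (\<Sum>v\<in>A. \<Sum>i\<le>K. if i = d v then f i else 0)"
    using assms(2) by (intro sum.cong refl) (simp add: sum.delta)
  also have "\<dots> = (\<Sum>i\<le>K. \<Sum>v\<in>A. if i = d v then f i else 0)"
    by (rule sum.swap)
  also have "\<dots> = (\<Sum>i\<le>K. of_nat (card {v\<in>A. d v = i}) * f i)"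
  proof (rule sum.cong[OF refl])
    fix i
    have "(\<Sum>v\<in>A. if i = d v then f i else 0) = (\<Sum>v\<in>{v\<in>A. d v = i}. f i)"
      unfolding sum.inter_filter[OF assms(1)] by (rule sum.cong) auto
    then show "(\<Sum>v\<in>A. if i = d v then f i else 0) = of_nat (card {v\<in>A. d v = i}) * f i"
      by simp
  qed
  finally show ?thesis .
qed

lemma card_high_cluster_indegree_markov_equiv:
  fixes C :: "'n::finite set"
  assumes G: "is_DAG G" and H: "is_DAG H" and GH: "markov_equiv G H"
  shows "card {a\<in>C. k \<le> cluster_indegree C G a} = card {a\<in>C. k \<le> cluster_indegree C H a}"
proof -
  define N :: "('n \<times> 'n) set \<Rightarrow> nat \<Rightarrow> real"
    where "N X i = real (card {v\<in>C. cluster_indegree C X v = i})" for X i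
  have bounded: "\<forall>v\<in>C. cluster_indegree C X v \<le> card C" for X
    unfolding cluster_indegree_def by (auto intro: card_mono)
  have expand: "(\<Sum>v\<in>C. f (cluster_indegree C X v)) = (\<Sum>i\<le>card C. N X i * f i)"
    for X and f :: "nat \<Rightarrow> real"
    unfolding N_def by (rule sum_comp_eq_sum_card_fibres[OF finite bounded])
  have "\<forall>y::real. (\<Sum>i\<le>card C. N G i * y ^ i) = (\<Sum>i\<le>card C. N H i * y ^ i)"
    using sum_power_cluster_indegree_markov_equiv[OF G H GH] expand[of "\<lambda>i. _ ^ i"] by metis
  then have coeffs: "\<forall>i\<le>card C. N G i = N H i"
    by (simp only: polyfun_eq_coeffs)
  have high: "real (card {a\<in>C. k \<le> cluster_indegree C X a})
      = (\<Sum>i\<le>card C. N X i * (if k \<le> i then 1 else 0))" for X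
  proof -
    have "real (card {a\<in>C. k \<le> cluster_indegree C X a})
        = (\<Sum>v\<in>C. (\<lambda>i. if k \<le> i then 1 else (0::real)) (cluster_indegree C X v))"
      by (simp add: sum.If_cases Int_def conj_commute)
    then show ?thesis using expand[of "\<lambda>i. if k \<le> i then 1 else 0" X] by simp
  qed
  have "real (card {a\<in>C. k \<le> cluster_indegree C G a}) = real (card {a\<in>C. k \<le> cluster_indegree C H a})"
    unfolding high using coeffs by (intro sum.cong refl) simp
  then show ?thesis by simp
qed

lemma SE_objective_cluster_vector:
  fixes C :: "'n::finite set"
  assumes "1 \<le> k"
  shows "SE_objective (cluster_vector C k)"
  unfolding SE_objective_def
proof (intro allI impI)
  fix G H :: "('n \<times> 'n) set"
  assume "is_DAG G" "is_DAG H" "markov_equiv G H"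
  then show "cluster_vector C k \<bullet> eta G = cluster_vector C k \<bullet> eta H"
    by (simp add: cluster_vector_inner_eta[OF _ assms] card_high_cluster_indegree_markov_equiv)
qed

section \<open>Functionals constant on the tight DAGs\<close>

definition is_tight_DAG :: "'n set \<Rightarrow> nat \<Rightarrow> ('n \<times> 'n) set \<Rightarrow> bool" where
  "is_tight_DAG C k G \<longleftrightarrow> is_DAG G \<and> card {a\<in>C. k \<le> cluster_indegree C G a} = card C - k"

definition standard_parents :: "'n set \<Rightarrow> 'n set \<Rightarrow> 'n \<Rightarrow> 'n set" where
  "standard_parents C L a = (if a \<in> C - L then L else {})"

lemma is_DAG_standard_parents: "is_DAG (graph_of (standard_parents C L))"
  by (rule is_DAG_graph_of_rank[where r = "\<lambda>a. if a \<in> C - L then 1 else 0"])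
    (auto simp: standard_parents_def split: if_splits)

lemma is_tight_standard_parents:
  fixes C :: "'n::finite set"
  assumes "L \<subseteq> C" "card L = k" "1 \<le> k"
  shows "is_tight_DAG C k (graph_of (standard_parents C L))"
proof -
  have "{a\<in>C. k \<le> cluster_indegree C (graph_of (standard_parents C L)) a} = C - L"
    using assms by (auto simp: cluster_indegree_def standard_parents_def Int_absorb2)
  then show ?thesis
    using assms by (simp add: is_tight_DAG_def is_DAG_standard_parents card_Diff_subset)
qed

lemma is_tight_DAG_upd:
  assumes "is_tight_DAG C k (graph_of \<pi>)" "is_DAG (graph_of (\<pi>(x := B)))"
    and "x \<notin> C \<or> (k \<le> card (B \<inter> C) \<longleftrightarrow> k \<le> card (\<pi> x \<inter> C))"
  shows "is_tight_DAG C k (graph_of (\<pi>(x := B)))"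
proof -
  have "{a\<in>C. k \<le> cluster_indegree C (graph_of (\<pi>(x := B))) a}
      = {a\<in>C. k \<le> cluster_indegree C (graph_of \<pi>) a}"
    using assms(3) by (auto simp: cluster_indegree_def)
  then show ?thesis using assms(1,2) by (simp add: is_tight_DAG_def)
qed

lemma eta_in_cluster_face:
  fixes C :: "'n::finite set"
  assumes "is_tight_DAG C k G" "1 \<le> k" "k \<le> card C"
  shows "eta G \<in> {v \<in> family_polytope. cluster_vector C k \<bullet> v = real (card C) - real k}"
  using assms cluster_vector_inner_eta[of G k C]
  by (auto simp: is_tight_DAG_def family_polytope_def of_nat_diff intro: hull_inc)

definition family_weight :: "real ^ ('n::finite \<times> 'n set) \<Rightarrow> 'n \<Rightarrow> 'n set \<Rightarrow> real" where
  "family_weight w a B = (if (a, B) \<in> Ups then w $ (a, B) else 0)"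

lemma family_weight_empty [simp]: "family_weight w a {} = 0"
  by (simp add: family_weight_def Ups_def)

lemma inner_eta_graph_of: "w \<bullet> eta (graph_of \<pi>) = (\<Sum>a\<in>UNIV. family_weight w a (\<pi> a))"
  by (simp only: inner_eta family_weight_def pa_graph_of)

text \<open>Each coordinate is isolated by changing the parent set of a single vertex of a standard
  tight DAG in a way that keeps it acyclic and tight.\<close>

locale tight_face_normal =
  fixes C :: "'n::finite set" and k :: nat and w :: "real ^ ('n \<times> 'n set)" and u :: real
  assumes k_pos: "1 \<le> k" and k_less: "k < card C"
    and constant_on_tight: "\<And>G. is_tight_DAG C k G \<Longrightarrow> w \<bullet> eta G = u"
begin

lemma family_weight_upd:
  assumes "is_tight_DAG C k (graph_of \<pi>)" "is_tight_DAG C k (graph_of (\<pi>(x := B)))"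
  shows "family_weight w x B = family_weight w x (\<pi> x)"
proof -
  have "(\<Sum>a\<in>UNIV. family_weight w a ((\<pi>(x := B)) a)) = (\<Sum>a\<in>UNIV. family_weight w a (\<pi> a))"
    using constant_on_tight[OF assms(1)] constant_on_tight[OF assms(2)]
    by (simp only: inner_eta_graph_of)
  then show ?thesis by (simp add: sum.remove[of UNIV x])
qed

lemma coord_outside_cluster:
  assumes "x \<notin> C" "(x, B) \<in> Ups"
  shows "w $ (x, B) = 0"
proof -
  obtain L where L: "L \<subseteq> C" "card L = k"
    using exists_subset_between[of "{}" k C] k_less by auto
  have tight: "is_tight_DAG C k (graph_of (standard_parents C L))"
    using is_tight_standard_parents[OF L k_pos] .
  have "is_DAG (graph_of ((standard_parents C L)(x := B)))"
    by (rule is_DAG_graph_of_rank[where r = "\<lambda>a. if a = x then 2 else if a \<in> C - L then 1 else 0"])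
      (use assms L in \<open>auto simp: standard_parents_def Ups_def split: if_splits\<close>)
  then have "family_weight w x B = family_weight w x (standard_parents C L x)"
    using assms(1) by (intro family_weight_upd[OF tight] is_tight_DAG_upd[OF tight]) auto
  also have "\<dots> = 0" using assms(1) by (simp add: standard_parents_def)
  finally show ?thesis using assms(2) by (simp add: family_weight_def)
qed

lemma coord_few_cluster_parents:
  assumes "x \<in> C" "(x, B) \<in> Ups" "card (B \<inter> C) < k"
  shows "w $ (x, B) = 0"
proof -
  have "card (insert x (B \<inter> C)) \<le> k"
    using assms(3) by (simp add: card_insert_if)
  then obtain L where L: "insert x (B \<inter> C) \<subseteq> L" "L \<subseteq> C" "card L = k"
    using exists_subset_between[of "insert x (B \<inter> C)" k C] k_less assms(1) by auto
  have tight: "is_tight_DAG C k (graph_of (standard_parents C L))"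
    using is_tight_standard_parents[OF L(2,3) k_pos] .
  have "x \<notin> B" using assms(2) by (simp add: Ups_def)
  then have "is_DAG (graph_of ((standard_parents C L)(x := B)))"
    by (intro is_DAG_graph_of_rank[where r = "\<lambda>a. if a \<in> C - L then 2 else if a = x then 1 else 0"])
      (use L in \<open>auto simp: standard_parents_def split: if_splits\<close>)
  then have "family_weight w x B = family_weight w x (standard_parents C L x)"
    using assms L k_pos
    by (intro family_weight_upd[OF tight] is_tight_DAG_upd[OF tight]) (auto simp: standard_parents_def)
  also have "\<dots> = 0" using L by (simp add: standard_parents_def)
  finally show ?thesis using assms(2) by (simp add: family_weight_def)
qed

lemma coord_many_cluster_parents:
  assumes "x \<in> C" "(x, B) \<in> Ups" "k \<le> card (B \<inter> C)" "L \<subseteq> C - {x}" "card L = k"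
  shows "w $ (x, B) = family_weight w x L"
proof -
  have L: "L \<subseteq> C" "x \<notin> L" "L \<inter> C = L" using assms(4) by auto
  have tight: "is_tight_DAG C k (graph_of (standard_parents C L))"
    using is_tight_standard_parents[OF L(1) assms(5) k_pos] .
  have "x \<notin> B" using assms(2) by (simp add: Ups_def)
  then have "is_DAG (graph_of ((standard_parents C L)(x := B)))"
    by (intro is_DAG_graph_of_rank[where r = "\<lambda>a. if a = x then 2 else if a \<in> C - L then 1 else 0"])
      (use L in \<open>auto simp: standard_parents_def split: if_splits\<close>)
  then have "family_weight w x B = family_weight w x (standard_parents C L x)"
    using assms L
    by (intro family_weight_upd[OF tight] is_tight_DAG_upd[OF tight]) (auto simp: standard_parents_def)
  then show ?thesis using assms(1,2) L by (simp add: family_weight_def standard_parents_def)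
qed

definition cluster_weight :: "'n \<Rightarrow> real" where
  "cluster_weight x = family_weight w x (SOME L. L \<subseteq> C - {x} \<and> card L = k)"

lemma coord_eq_cluster_weight:
  assumes "x \<in> C" "(x, B) \<in> Ups" "k \<le> card (B \<inter> C)"
  shows "w $ (x, B) = cluster_weight x"
proof -
  have "\<exists>L. L \<subseteq> C - {x} \<and> card L = k"
    using exists_subset_between[of "{}" k "C - {x}"] k_less assms(1) by auto
  then show ?thesis
    unfolding cluster_weight_def by (rule someI2_ex) (use coord_many_cluster_parents[OF assms] in blast)
qed

lemma sum_cluster_weight_complement:
  assumes "L \<subseteq> C" "card L = k"
  shows "(\<Sum>z\<in>C - L. cluster_weight z) = u"
proof -
  have "family_weight w z L = cluster_weight z" if "z \<in> C - L" for z
  proof -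
    have "(z, L) \<in> Ups" using that assms k_pos by (auto simp: Ups_def)
    then show ?thesis
      using coord_eq_cluster_weight[of z L] that assms by (simp add: family_weight_def Int_absorb2)
  qed
  then have "(\<Sum>a\<in>UNIV. family_weight w a (standard_parents C L a))
      = (\<Sum>a\<in>UNIV. if a \<in> C - L then cluster_weight a else 0)"
    by (intro sum.cong refl) (simp add: standard_parents_def)
  also have "\<dots> = (\<Sum>z\<in>C - L. cluster_weight z)"
    by (simp only: sum.If_cases finite Int_UNIV_left sum.neutral_const add_0_right Collect_mem_eq)
  finally have "(\<Sum>a\<in>UNIV. family_weight w a (standard_parents C L a)) = (\<Sum>z\<in>C - L. cluster_weight z)" .
  moreover have "(\<Sum>a\<in>UNIV. family_weight w a (standard_parents C L a)) = u"
    using constant_on_tight[OF is_tight_standard_parents[OF assms k_pos]]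
    by (simp only: inner_eta_graph_of)
  ultimately show ?thesis by simp
qed

lemma cluster_weight_eq:
  assumes "a \<in> C" "b \<in> C"
  shows "cluster_weight a = cluster_weight b"
proof (cases "a = b")
  case False
  have "k \<le> card (C - {a})" using k_less assms(1) by (simp add: card_Diff_singleton)
  then obtain L where L: "{b} \<subseteq> L" "L \<subseteq> C - {a}" "card L = k"
    using exists_subset_between[of "{b}" k "C - {a}"] k_pos assms False by auto
  define L' where "L' = insert a (L - {b})"
  have "a \<notin> L - {b}" "card (L - {b}) = k - 1"
    using L by (auto simp: card_Diff_singleton)
  then have "card L' = k"
    unfolding L'_def using k_pos by (simp add: card_insert_disjoint)
  moreover have "L' \<subseteq> C" using L assms by (auto simp: L'_def)
  moreover define D where "D = C - L - {a}"
  moreover have "C - L = insert a D" "C - L' = insert b D" "a \<notin> D" "b \<notin> D"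
    using L assms by (auto simp: D_def L'_def)
  ultimately have "cluster_weight a + sum cluster_weight D = u" "cluster_weight b + sum cluster_weight D = u"
    using sum_cluster_weight_complement[of L] sum_cluster_weight_complement[of L'] L by auto
  then show ?thesis by simp
qed simp

lemma coords_proportional_cluster_vector: "\<exists>\<mu>. \<forall>p\<in>Ups. w $ p = \<mu> * cluster_vector C k $ p"
proof -
  obtain x0 where x0: "x0 \<in> C" using k_less by fastforce
  have "w $ (x, B) = cluster_weight x0 * cluster_vector C k $ (x, B)" if "(x, B) \<in> Ups" for x B
  proof -
    consider "x \<notin> C" | "x \<in> C" "card (B \<inter> C) < k" | "x \<in> C" "k \<le> card (B \<inter> C)"
      by linarith
    then show ?thesis
    proof cases
      case 1
      then show ?thesis using coord_outside_cluster that by (simp add: cluster_vector_def)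
    next
      case 2
      then show ?thesis using coord_few_cluster_parents that by (simp add: cluster_vector_def)
    next
      case 3
      then show ?thesis
        using coord_eq_cluster_weight cluster_weight_eq[OF _ x0] that
        by (auto simp: cluster_vector_def Ups_def)
    qed
  qed
  then show ?thesis by auto
qed

end

section \<open>The face has codimension one\<close>

lemma dim_substandard_real_cart: "dim {x :: real ^ 'i. \<forall>i. i \<notin> d \<longrightarrow> x $ i = 0} = card d"
  using dim_substandard_cart[where 'a=real] unfolding dim_vec_eq .

lemma aff_dim_family_polytope_le:
  "aff_dim (family_polytope :: (real ^ ('n::finite \<times> 'n set)) set) \<le> int (card (Ups :: ('n \<times> 'n set) set))"
proof -
  let ?S = "{x :: real ^ ('n \<times> 'n set). \<forall>p. p \<notin> Ups \<longrightarrow> x $ p = 0}"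
  have S: "subspace ?S"
    unfolding subspace_vec_eq[symmetric] by (rule subspace_substandard_cart)
  have "(family_polytope :: (real ^ ('n \<times> 'n set)) set) \<subseteq> ?S"
    unfolding family_polytope_def
  proof (rule hull_minimal)
    show "{eta G |G. is_DAG G} \<subseteq> ?S" by (auto simp: eta_def)
    show "convex ?S" using S by (rule subspace_imp_convex)
  qed
  then have "aff_dim (family_polytope :: (real ^ ('n \<times> 'n set)) set) \<le> aff_dim ?S"
    by (rule aff_dim_subset)
  also have "\<dots> = int (dim ?S)"
    using S by (rule aff_dim_subspace)
  also have "dim ?S = card (Ups :: ('n \<times> 'n set) set)"
    by (rule dim_substandard_real_cart)
  finally show ?thesis .
qed

lemma aff_dim_ge_by_normals:
  fixes F :: "'a::euclidean_space set"
  assumes "x0 \<in> F" "subspace W" "\<And>y. \<forall>x\<in>F. y \<bullet> x = y \<bullet> x0 \<Longrightarrow> y \<in> W"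
  shows "int DIM('a) - int (dim W) \<le> aff_dim F"
proof -
  define D where "D = (+) (- x0) ` F"
  have aff: "aff_dim F = int (dim D)"
    unfolding D_def by (rule aff_dim_eq_dim[OF hull_inc[OF assms(1)]])
  define Orth where "Orth = {y \<in> UNIV. \<forall>x\<in>span D. orthogonal x y}"
  have "dim Orth + dim (span D) = dim (UNIV :: 'a set)"
    unfolding Orth_def by (rule dim_subspace_orthogonal_to_vectors) (auto simp: subspace_span)
  moreover have "Orth \<subseteq> W"
  proof
    fix y assume y: "y \<in> Orth"
    have "y \<bullet> x = y \<bullet> x0" if "x \<in> F" for x
    proof -
      have "- x0 + x \<in> span D" using that unfolding D_def by (intro span_base) auto
      then have "(- x0 + x) \<bullet> y = 0" using y by (simp add: Orth_def orthogonal_def)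
      then have "y \<bullet> (x - x0) = 0" by (simp add: inner_commute)
      then show ?thesis by (simp add: inner_diff_right)
    qed
    then have "\<forall>x\<in>F. y \<bullet> x = y \<bullet> x0" by blast
    then show "y \<in> W" by (rule assms(3))
  qed
  then have "dim Orth \<le> dim W" by (rule dim_subset)
  ultimately show ?thesis using aff by simp
qed

lemma cluster_face_normal_in_span:
  fixes C :: "'n::finite set" and k :: nat
  defines "F \<equiv> {v \<in> family_polytope. cluster_vector C k \<bullet> v = real (card C) - real k}"
  assumes "1 \<le> k" "k < card C" "x0 \<in> F" and y: "\<forall>x\<in>F. y \<bullet> x = y \<bullet> x0"
  shows "y \<in> span (insert (cluster_vector C k) {y. \<forall>p. p \<notin> - Ups \<longrightarrow> y $ p = 0})"
proof -
  interpret tight_face_normal C k y "y \<bullet> x0"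
  proof
    show "1 \<le> k" "k < card C" by (fact assms)+
    fix G assume "is_tight_DAG C k G"
    then have "eta G \<in> F" unfolding F_def using assms by (intro eta_in_cluster_face) auto
    then show "y \<bullet> eta G = y \<bullet> x0" using y by blast
  qed
  obtain \<mu> where \<mu>: "\<forall>p\<in>Ups. y $ p = \<mu> * cluster_vector C k $ p"
    using coords_proportional_cluster_vector by blast
  have "y - \<mu> *\<^sub>R cluster_vector C k \<in> {y. \<forall>p. p \<notin> - Ups \<longrightarrow> y $ p = 0}" using \<mu> by simp
  then have "\<mu> *\<^sub>R cluster_vector C k + (y - \<mu> *\<^sub>R cluster_vector C k)
      \<in> span (insert (cluster_vector C k) {y. \<forall>p. p \<notin> - Ups \<longrightarrow> y $ p = 0})"
    by (intro span_add span_scale span_base) auto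
  then show ?thesis by simp
qed

lemma aff_dim_cluster_face_ge:
  fixes C :: "'n::finite set"
  assumes "1 \<le> k" "k < card C"
  shows "int (card (Ups :: ('n \<times> 'n set) set)) - 1
           \<le> aff_dim {v \<in> family_polytope. cluster_vector C k \<bullet> v = real (card C) - real k}"
proof -
  let ?F = "{v \<in> family_polytope. cluster_vector C k \<bullet> v = real (card C) - real k}"
  let ?S = "{y :: real ^ ('n \<times> 'n set). \<forall>p. p \<notin> - Ups \<longrightarrow> y $ p = 0}"
  let ?W = "span (insert (cluster_vector C k) ?S)"
  obtain L where L: "L \<subseteq> C" "card L = k"
    using exists_subset_between[of "{}" k C] assms by auto
  define x0 where "x0 = eta (graph_of (standard_parents C L))"
  have x0: "x0 \<in> ?F"
    unfolding x0_def using is_tight_standard_parents[OF L assms(1)] assms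
    by (intro eta_in_cluster_face) simp_all
  have "y \<in> ?W" if "\<forall>x\<in>?F. y \<bullet> x = y \<bullet> x0" for y
    using cluster_face_normal_in_span[OF assms x0 that] .
  then have "int DIM(real ^ ('n \<times> 'n set)) - int (dim ?W) \<le> aff_dim ?F"
    by (intro aff_dim_ge_by_normals[OF x0]) auto
  moreover have "dim ?W \<le> dim ?S + 1"
    unfolding dim_span dim_insert by simp
  moreover have "dim ?S = card (- (Ups :: ('n \<times> 'n set) set))"
    by (rule dim_substandard_real_cart)
  moreover have "card (- (Ups :: ('n \<times> 'n set) set)) + card (Ups :: ('n \<times> 'n set) set) = CARD('n \<times> 'n set)"
    using card_Un_disjoint[of "- (Ups :: ('n \<times> 'n set) set)" Ups] by (simp add: Compl_partition2)
  moreover have "DIM(real ^ ('n \<times> 'n set)) = CARD('n \<times> 'n set)"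
    by simp
  ultimately show ?thesis by linarith
qed

lemma cluster_face_facet_of:
  fixes C :: "'n::finite set"
  assumes "1 \<le> k" "k < card C"
  shows "{v \<in> family_polytope. cluster_vector C k \<bullet> v = real (card C) - real k}
           facet_of (family_polytope :: (real ^ ('n \<times> 'n set)) set)"
proof -
  let ?P = "family_polytope :: (real ^ ('n \<times> 'n set)) set"
  let ?F = "{v \<in> ?P. cluster_vector C k \<bullet> v = real (card C) - real k}"
  have convex: "convex ?P" by (simp add: family_polytope_def)
  have "\<And>v. v \<in> ?P \<Longrightarrow> cluster_vector C k \<bullet> v \<le> real (card C) - real k"
    using family_polytope_cluster_valid[OF assms(1) less_imp_le[OF assms(2)]] by blast
  then have "(?P \<inter> {v. cluster_vector C k \<bullet> v = real (card C) - real k}) face_of ?P"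
    by (rule face_of_Int_supporting_hyperplane_le[OF convex])
  moreover have "?P \<inter> {v. cluster_vector C k \<bullet> v = real (card C) - real k} = ?F" by blast
  ultimately have face: "?F face_of ?P" by simp
  obtain L where L: "L \<subseteq> C" "card L = k"
    using exists_subset_between[of "{}" k C] assms by auto
  have "?F \<noteq> {}"
    using eta_in_cluster_face[OF is_tight_standard_parents[OF L assms(1)] assms(1)] assms by auto
  have "eta {} \<in> ?P"
    unfolding family_polytope_def using is_DAG_empty by (intro hull_inc) blast
  moreover have "eta {} \<notin> ?F"
    using assms by (simp add: eta_empty)
  ultimately have "?F \<noteq> ?P" by blast
  then have "aff_dim ?F < aff_dim ?P"
    by (rule face_of_aff_dim_lt[OF convex face])
  then have "aff_dim ?F = aff_dim ?P - 1"
    using aff_dim_family_polytope_le[where 'n = 'n] aff_dim_cluster_face_ge[OF assms] by linarith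
  then show ?thesis
    unfolding facet_of_def using face \<open>?F \<noteq> {}\<close> by blast
qed

theorem corollary4:
  fixes C :: "'n::finite set" and k :: nat
  assumes "card C \<ge> 2" and "1 \<le> k" and "k \<le> card C - 1"
  shows "family_polytope \<subseteq> {v :: real ^ ('n \<times> 'n set). gen_cluster_lhs C k v \<le> real (card C) - real k}
     \<and> SE_facet {v \<in> (family_polytope :: (real ^ ('n \<times> 'n set)) set).
                   gen_cluster_lhs C k v = real (card C) - real k}"
proof -
  have k: "1 \<le> k" "k < card C" using assms by linarith+
  note valid = family_polytope_cluster_valid[OF k(1) less_imp_le[OF k(2)]]
  show ?thesis
    unfolding gen_cluster_lhs_eq_inner SE_facet_def
    using valid cluster_face_facet_of[OF k] SE_objective_cluster_vector[OF k(1)] by blast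
qed

end
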